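(* (1) There exists a sequent that is not cut-free provable in $\mathtt{GTPDL}$ but is cut-free provable in $\mathtt{CGTPDL}$; moreover, there exists a sequent that is not Fischer–Ladner-cut provable in $\mathtt{GTPDL}$ but is cut-free provable in $\mathtt{CGTPDL}$. (2) There exists a sequent that is provable in both $\mathtt{GTPDL}$ and $\mathtt{CGTPDL}$, but is cut-free provable in neither.
   Context: $\mathtt{TPDL}$ formulas/programs over sets $\mathsf{Prop}$, $\mathsf{AtProg}$: $\varphi ::= \bot \mid p \mid (\varphi\to\varphi) \mid [\pi]\varphi \mid [\pi]^{\leftarrow}\varphi$, $\pi ::= \alpha \mid \pi;\pi \mid \pi\cup\pi \mid \pi^{*} \mid \varphi?$. $[\pi]\Gamma=\{[\pi]\varphi:\varphi\in\Gamma\}$, similarly $[\pi]^{\leftarrow}\Gamma$. A sequent is a pair $\Gamma\Rightarrow\Delta$ of finite sets of formulas. Common rules (premises / conclusion): (Ax) / $\Gamma\Rightarrow\Delta$, $\Gamma\cap\Delta\neq\emptyset$; ($\bot$) / $\Gamma,\bot\Rightarrow\Delta$; ($\to$L) $\Gamma\Rightarrow\varphi,\Delta$ and $\Gamma,\psi\Rightarrow\Delta$ / $\Gamma,\varphi\to\psi\Rightarrow\Delta$; ($\to$R) $\Gamma,\varphi\Rightarrow\psi,\Delta$ / $\Gamma\Rightarrow\varphi\to\psi,\Delta$; (Wk) $\Gamma\Rightarrow\Delta$ / $\Gamma'\Rightarrow\Delta'$, $\Gamma\subseteq\Gamma'$, $\Delta\subseteq\Delta'$; (Cut) $\Gamma\Rightarrow\varphi,\Delta$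 and $\Gamma,\varphi\Rightarrow\Delta$ / $\Gamma\Rightarrow\Delta$ ($\varphi$ is the cut formula); ($[\,]$) $\Gamma\Rightarrow\varphi,[\pi]^{\leftarrow}\Delta$ / $[\pi]\Gamma\Rightarrow[\pi]\varphi,\Delta$; ($[\,]^{\leftarrow}$) $\Gamma\Rightarrow\varphi,[\pi]\Delta$ / $[\pi]^{\leftarrow}\Gamma\Rightarrow[\pi]^{\leftarrow}\varphi,\Delta$; ($[;]$L) $\Gamma,[\pi_0][\pi_1]\varphi\Rightarrow\Delta$ / $\Gamma,[\pi_0;\pi_1]\varphi\Rightarrow\Delta$; ($[;]$R) $\Gamma\Rightarrow[\pi_0][\pi_1]\varphi,\Delta$ / $\Gamma\Rightarrow[\pi_0;\pi_1]\varphi,\Delta$; ($[\cup]$L) $\Gamma,[\pi_0]\varphi,[\pi_1]\varphi\Rightarrow\Delta$ / $\Gamma,[\pi_0\cup\pi_1]\varphi\Rightarrow\Delta$; ($[\cup]$R) $\Gamma\Rightarrow\Delta,[\pi_0]\varphi$ and $\Gamma\Rightarrow\Delta,[\pi_1]\varphi$ / $\Gamma\Rightarrow[\pi_0\cup\pi_1]\varphi,\Delta$; ($[*]$L) $\Gamma,\varphi,[\pi][\pi^*]\varphi\Rightarrow\Delta$ / $\Gamma,[\pi^*]\varphi\Rightarrow\Delta$; ($[?]$L) $\Gamma\Rightarrow\varphi,\Delta$ and $\Gamma,\psi\Rightarrow\Delta$ / $\Gamma,[\varphi?]\psi\Rightarrow\Delta$; ($[?]$R) $\Gamma,\varphi\Rightarrow\psi,\Delta$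 / $\Gamma\Rightarrow[\varphi?]\psi,\Delta$. $\mathtt{GTPDL}$ adds ($[*]$R) $\Gamma,\varphi\Rightarrow[\pi]\varphi$ / $[\pi^*]\Gamma,\varphi\Rightarrow[\pi^*]\varphi$; its proofs are finite trees of rule instances with all leaves Ax/$\bot$. $\mathtt{CGTPDL}$ instead adds (C-s) $\Gamma\Rightarrow\varphi,\Delta$ and $\Gamma\Rightarrow[\pi][\pi^*]\varphi,\Delta$ / $\Gamma\Rightarrow[\pi^*]\varphi,\Delta$; its proofs are finite trees of rule instances whose leaves are Ax/$\bot$ instances or buds, each bud assigned a companion (an inner node with the same sequent), such that in the graph identifying buds with companions every infinite path has a tail followed by a trace with infinitely many progress points. Here a trace along a path $(\Gamma_i\Rightarrow\Delta_i)$ is a sequence $\tau_i\in\Delta_i$ which at ($\to$R), ($[;]$R), ($[\cup]$R), ($[?]$R), (C-s) either stays the same or passes from the principal formula to its component in the chosen premise ($\psi$ for $\varphi\to\psi$; $[\pi_0][\pi_1]\varphi$; $[\pi_j]\varphi$; $\psi$ for $[\varphi?]\psi$; $\varphi$ or $[\pi][\pi^*]\varphi$ for $[\pi^*]\varphi$, the latter a progress point), at ($[\,]$)/($[\,]^{\leftarrow}$) passes from the principal $[\pi]\varphi$/$[\pi]^{\leftarrow}\varphi$ to $\varphi$, and otherwise stays the same. A proof is cut-free if it contains no instance of Cut. The Fischer–Ladner closure $\mathrm{FL}(\Lambda)$ of a set of formulas: $\mathrm{FL}(\bot)=\{\bot\}$, $\mathrm{FL}(p)=\{p\}$, $\mathrm{FL}(\psi_0\to\psi_1)=\{\psi_0\to\psi_1\}\cup\mathrm{FL}(\psi_0)\cup\mathrm{FL}(\psi_1)$,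 $\mathrm{FL}([\pi]\psi)=\mathrm{FL}_\Box([\pi]\psi)\cup\mathrm{FL}(\psi)$, $\mathrm{FL}([\pi]^{\leftarrow}\psi)=\mathrm{FL}_\Box([\pi]^{\leftarrow}\psi)\cup\mathrm{FL}(\psi)$, where $\mathrm{FL}_\Box([\alpha]\psi)=\{[\alpha]\psi\}$, $\mathrm{FL}_\Box([\pi_0;\pi_1]\psi)=\{[\pi_0;\pi_1]\psi\}\cup\mathrm{FL}_\Box([\pi_0][\pi_1]\psi)\cup\mathrm{FL}_\Box([\pi_1]\psi)$, $\mathrm{FL}_\Box([\pi_0\cup\pi_1]\psi)=\{[\pi_0\cup\pi_1]\psi\}\cup\mathrm{FL}_\Box([\pi_0]\psi)\cup\mathrm{FL}_\Box([\pi_1]\psi)$, $\mathrm{FL}_\Box([\pi^*]\psi)=\{[\pi^*]\psi\}\cup\mathrm{FL}_\Box([\pi][\pi^*]\psi)$, $\mathrm{FL}_\Box([\psi_0?]\psi_1)=\{[\psi_0?]\psi_1\}\cup\mathrm{FL}(\psi_0)$, and the backwards versions analogously except $\mathrm{FL}_\Box([\pi_0;\pi_1]^{\leftarrow}\psi)=\{[\pi_0;\pi_1]^{\leftarrow}\psi\}\cup\mathrm{FL}_\Box([\pi_1]^{\leftarrow}[\pi_0]^{\leftarrow}\psi)\cup\mathrm{FL}_\Box([\pi_0]^{\leftarrow}\psi)$; $\mathrm{FL}(\Lambda)=\bigcup_{\varphi\in\Lambda}\mathrm{FL}(\varphi)$. A Cut instance with conclusion $\Gamma\Rightarrow\Delta$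 is a Fischer–Ladner-cut if its cut formula lies in $\mathrm{FL}(\Gamma\cup\Delta)$; a sequent is Fischer–Ladner-cut provable in a system if it has a proof there in which every Cut instance is a Fischer–Ladner-cut. *)

theory Defs
  imports Main
begin

datatype fm = Bot | Pr nat | Imp fm fm | Box pg fm | BoxC pg fm
and pg = At nat | Seq pg pg | Ch pg pg | Star pg | Test fm

type_synonym sequent = "fm set \<times> fm set"

definition fin_seq :: "sequent \<Rightarrow> bool" where
  "fin_seq s \<longleftrightarrow> finite (fst s) \<and> finite (snd s)"

text \<open>Rule labels carry the principal formula data. StarG is the GTPDL rule
([*]R); CS is the CGTPDL rule (C-s).\<close>

datatype rule = RAx | RBot | ImpL fm fm | ImpR fm fm | Wk | Cut fm
  | BoxR pg fm | BoxCR pg fm | SeqL pg pg fm | SeqR pg pg fm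
  | ChL pg pg fm | ChR pg pg fm | StarL pg fm | TestL fm fm | TestR fm fm
  | StarG pg fm | CS pg fm

inductive step :: "rule \<Rightarrow> sequent \<Rightarrow> sequent list \<Rightarrow> bool" where
  ax: "G \<inter> D \<noteq> {} \<Longrightarrow> step RAx (G, D) []"
| bot: "Bot \<in> G \<Longrightarrow> step RBot (G, D) []"
| impL: "step (ImpL a b) (insert (Imp a b) G, D) [(G, insert a D), (insert b G, D)]"
| impR: "step (ImpR a b) (G, insert (Imp a b) D) [(insert a G, insert b D)]"
| wk: "G \<subseteq> G' \<Longrightarrow> D \<subseteq> D' \<Longrightarrow> step Wk (G', D') [(G, D)]"
| cut: "step (Cut a) (G, D) [(G, insert a D), (insert a G, D)]"
| box: "step (BoxR p a) (Box p ` G, insert (Box p a) D) [(G, insert a (BoxC p ` D))]"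
| boxc: "step (BoxCR p a) (BoxC p ` G, insert (BoxC p a) D) [(G, insert a (Box p ` D))]"
| seqL: "step (SeqL p q a) (insert (Box (Seq p q) a) G, D) [(insert (Box p (Box q a)) G, D)]"
| seqR: "step (SeqR p q a) (G, insert (Box (Seq p q) a) D) [(G, insert (Box p (Box q a)) D)]"
| chL: "step (ChL p q a) (insert (Box (Ch p q) a) G, D) [(insert (Box p a) (insert (Box q a) G), D)]"
| chR: "step (ChR p q a) (G, insert (Box (Ch p q) a) D)
          [(G, insert (Box p a) D), (G, insert (Box q a) D)]"
| starL: "step (StarL p a) (insert (Box (Star p) a) G, D)
          [(insert a (insert (Box p (Box (Star p) a)) G), D)]"
| testL: "step (TestL a b) (insert (Box (Test a) b) G, D) [(G, insert a D), (insert b G, D)]"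
| testR: "step (TestR a b) (G, insert (Box (Test a) b) D) [(insert a G, insert b D)]"
| starG: "step (StarG p a) (insert a (Box (Star p) ` G), {Box (Star p) a}) [(insert a G, {Box p a})]"
| cs: "step (CS p a) (G, insert (Box (Star p) a) D)
          [(G, insert a D), (G, insert (Box p (Box (Star p) a)) D)]"

definition rstep :: "rule \<Rightarrow> sequent \<Rightarrow> sequent list \<Rightarrow> bool" where
  "rstep r s ps \<longleftrightarrow> step r s ps \<and> fin_seq s \<and> (\<forall>q\<in>set ps. fin_seq q)"

fun is_CS :: "rule \<Rightarrow> bool" where
  "is_CS (CS _ _) = True" | "is_CS _ = False"

fun is_StarG :: "rule \<Rightarrow> bool" where
  "is_StarG (StarG _ _) = True" | "is_StarG _ = False"

inductive gprov :: "(sequent \<Rightarrow> fm \<Rightarrow> bool) \<Rightarrow> sequent \<Rightarrow> bool" for ok where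
  "rstep r s ps \<Longrightarrow> \<not> is_CS r \<Longrightarrow> (\<forall>a. r = Cut a \<longrightarrow> ok s a)
   \<Longrightarrow> (\<forall>q\<in>set ps. gprov ok q) \<Longrightarrow> gprov ok s"

text \<open>Finite trees; a Bud carries its sequent and the position of its companion.\<close>
datatype ctree = Bud sequent "nat list" | Nd sequent rule "ctree list"

fun root :: "ctree \<Rightarrow> sequent" where
  "root (Bud s _) = s" | "root (Nd s _ _) = s"

inductive at :: "ctree \<Rightarrow> nat list \<Rightarrow> ctree \<Rightarrow> bool" where
  "at t [] t"
| "i < length ts \<Longrightarrow> at (ts ! i) p u \<Longrightarrow> at (Nd s r ts) (i # p) u"

definition cwf :: "(sequent \<Rightarrow> fm \<Rightarrow> bool) \<Rightarrow> ctree \<Rightarrow> bool" where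
  "cwf ok t \<longleftrightarrow> (\<forall>p u. at t p u \<longrightarrow>
     (case u of
        Nd s r ts \<Rightarrow> rstep r s (map root ts) \<and> \<not> is_StarG r \<and> (\<forall>a. r = Cut a \<longrightarrow> ok s a)
      | Bud s c \<Rightarrow> (\<exists>r ts. at t c (Nd s r ts) \<and> ts \<noteq> [])))"

text \<open>Edge of the graph obtained by identifying buds with companions: from inner
node at p via premise i to q.\<close>
definition edge :: "ctree \<Rightarrow> nat list \<Rightarrow> nat \<Rightarrow> nat list \<Rightarrow> bool" where
  "edge t p i q \<longleftrightarrow> (\<exists>s r ts. at t p (Nd s r ts) \<and> i < length ts \<and>
     (case ts ! i of Nd _ _ _ \<Rightarrow> q = p @ [i] | Bud _ c \<Rightarrow> q = c))"

text \<open>Trace relation: trace formula tau in the conclusion's succedent, tau' in the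
succedent of premise i.\<close>
fun tr :: "rule \<Rightarrow> nat \<Rightarrow> fm \<Rightarrow> fm \<Rightarrow> bool" where
  "tr (ImpR a b) i t t' = (t' = t \<or> (t = Imp a b \<and> t' = b))"
| "tr (SeqR p q a) i t t' = (t' = t \<or> (t = Box (Seq p q) a \<and> t' = Box p (Box q a)))"
| "tr (ChR p q a) i t t' = (t' = t \<or> (t = Box (Ch p q) a \<and> t' = (if i = 0 then Box p a else Box q a)))"
| "tr (TestR a b) i t t' = (t' = t \<or> (t = Box (Test a) b \<and> t' = b))"
| "tr (CS p a) i t t' = (t' = t \<or>
      (t = Box (Star p) a \<and> t' = (if i = 0 then a else Box p (Box (Star p) a))))"
| "tr (BoxR p a) i t t' = (t = Box p a \<and> t' = a)"
| "tr (BoxCR p a) i t t' = (t = BoxC p a \<and> t' = a)"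
| "tr _ i t t' = (t' = t)"

fun prog :: "rule \<Rightarrow> nat \<Rightarrow> fm \<Rightarrow> fm \<Rightarrow> bool" where
  "prog (CS p a) i t t' = (i = 1 \<and> t = Box (Star p) a \<and> t' = Box p (Box (Star p) a))"
| "prog _ i t t' = False"

definition trace_ok :: "ctree \<Rightarrow> bool" where
  "trace_ok t \<longleftrightarrow> (\<forall>ps is. (\<forall>k. edge t (ps k) (is k) (ps (Suc k))) \<longrightarrow>
     (\<exists>n \<tau>. (\<forall>k\<ge>n. \<exists>s r ts. at t (ps k) (Nd s r ts) \<and> \<tau> k \<in> snd s \<and> tr r (is k) (\<tau> k) (\<tau> (Suc k)))
          \<and> infinite {k. k \<ge> n \<and> (\<exists>s r ts. at t (ps k) (Nd s r ts) \<and> prog r (is k) (\<tau> k) (\<tau> (Suc k)))}))"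

definition cprov :: "(sequent \<Rightarrow> fm \<Rightarrow> bool) \<Rightarrow> sequent \<Rightarrow> bool" where
  "cprov ok s \<longleftrightarrow> (\<exists>t. root t = s \<and> cwf ok t \<and> trace_ok t)"

fun fl :: "fm \<Rightarrow> fm set" and flb :: "pg \<Rightarrow> fm \<Rightarrow> fm set" and flbc :: "pg \<Rightarrow> fm \<Rightarrow> fm set" where
  "fl Bot = {Bot}"
| "fl (Pr n) = {Pr n}"
| "fl (Imp a b) = insert (Imp a b) (fl a \<union> fl b)"
| "fl (Box p a) = flb p a \<union> fl a"
| "fl (BoxC p a) = flbc p a \<union> fl a"
| "flb (At n) a = {Box (At n) a}"
| "flb (Seq p q) a = insert (Box (Seq p q) a) (flb p (Box q a) \<union> flb q a)"
| "flb (Ch p q) a = insert (Box (Ch p q) a) (flb p a \<union> flb q a)"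
| "flb (Star p) a = insert (Box (Star p) a) (flb p (Box (Star p) a))"
| "flb (Test b) a = insert (Box (Test b) a) (fl b)"
| "flbc (At n) a = {BoxC (At n) a}"
| "flbc (Seq p q) a = insert (BoxC (Seq p q) a) (flbc q (BoxC p a) \<union> flbc p a)"
| "flbc (Ch p q) a = insert (BoxC (Ch p q) a) (flbc p a \<union> flbc q a)"
| "flbc (Star p) a = insert (BoxC (Star p) a) (flbc p (BoxC (Star p) a))"
| "flbc (Test b) a = insert (BoxC (Test b) a) (fl b)"

definition FL :: "fm set \<Rightarrow> fm set" where
  "FL L = (\<Union>a\<in>L. fl a)"

definition no_cut :: "sequent \<Rightarrow> fm \<Rightarrow> bool" where "no_cut s a \<longleftrightarrow> False"
definition any_cut :: "sequent \<Rightarrow> fm \<Rightarrow> bool" where "any_cut s a \<longleftrightarrow> True"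
definition fl_cut :: "sequent \<Rightarrow> fm \<Rightarrow> bool" where
  "fl_cut s a \<longleftrightarrow> a \<in> FL (fst s \<union> snd s)"

end

theory Submission
  imports Defs "HOL-Library.Infinite_Set"
begin

(* Two small sequents over one atomic program \<alpha> and one atom p\<^sub>0 witness both claims.

[\<alpha>][\<alpha>*]p\<^sub>0 \<Rightarrow> [\<alpha>*][\<alpha>]p\<^sub>0 has a cut-free cyclic proof: unfold the succedent by (C-s);
after one \<alpha>-step the right premise is weakened back to the root sequent, and the trace
through the unfolding progresses on every cycle. It has no GTPDL proof even with
Fischer-Ladner cuts: every GTPDL rule instance, cuts restricted to Fischer-Ladner cuts,
whose conclusion has antecedent in \<Gamma>\<^sub>1 and succedent in \<Delta>\<^sub>1 (\<Gamma>\<^sub>1 \<union> \<Delta>\<^sub>1 is its own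
Fischer-Ladner closure) has a premise of the same kind or one refuted in the successor
model on nat -- ([*]R) included, as its premise is [\<alpha>]p\<^sub>0 \<Rightarrow> [\<alpha>][\<alpha>]p\<^sub>0 -- and refuted
sequents stay refuted backwards by soundness. Neither kind is an axiom, so no finite
proof exists.

p\<^sub>0 \<Rightarrow> [\<alpha>]\<not>[\<alpha>\<^sup>-]\<not>p\<^sub>0 is proved with a cut on \<not>p\<^sub>0, which ([ ]) carries into the succedent
as [\<alpha>\<^sup>-]\<not>p\<^sub>0. Without cut, backward search is trapped in the same way. This extends to
cyclic proofs because the sequent is star-free: then (C-s) never occurs, so there are no
progress points, the trace condition forbids infinite paths, and the proof graph is
well-founded. *)

section \<open>Refutations and backward-closed invariants\<close>

primrec sat :: "(nat \<Rightarrow> nat \<Rightarrow> nat \<Rightarrow> bool) \<Rightarrow> (nat \<Rightarrow> nat \<Rightarrow> bool) \<Rightarrow> fm \<Rightarrow> nat \<Rightarrow> bool"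
  and prel :: "(nat \<Rightarrow> nat \<Rightarrow> nat \<Rightarrow> bool) \<Rightarrow> (nat \<Rightarrow> nat \<Rightarrow> bool) \<Rightarrow> pg \<Rightarrow> nat \<Rightarrow> nat \<Rightarrow> bool" where
  "sat R V Bot x = False"
| "sat R V (Pr n) x = V n x"
| "sat R V (Imp a b) x = (sat R V a x \<longrightarrow> sat R V b x)"
| "sat R V (Box p a) x = (\<forall>y. prel R V p x y \<longrightarrow> sat R V a y)"
| "sat R V (BoxC p a) x = (\<forall>y. prel R V p y x \<longrightarrow> sat R V a y)"
| "prel R V (At n) x y = R n x y"
| "prel R V (Seq p q) x y = (\<exists>z. prel R V p x z \<and> prel R V q z y)"
| "prel R V (Ch p q) x y = (prel R V p x y \<or> prel R V q x y)"
| "prel R V (Star p) x y = (prel R V p)\<^sup>*\<^sup>* x y"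
| "prel R V (Test a) x y = (x = y \<and> sat R V a x)"

definition refutes :: "(nat \<Rightarrow> nat \<Rightarrow> nat \<Rightarrow> bool) \<Rightarrow> (nat \<Rightarrow> nat \<Rightarrow> bool) \<Rightarrow> nat \<Rightarrow> sequent \<Rightarrow> bool" where
  "refutes R V x s \<longleftrightarrow> (\<forall>g\<in>fst s. sat R V g x) \<and> (\<forall>d\<in>snd s. \<not> sat R V d x)"

definition refutable :: "sequent \<Rightarrow> bool" where
  "refutable s \<longleftrightarrow> (\<exists>R V x. refutes R V x s)"

lemma step_refutes:
  assumes "step r s ps" "refutes R V x s"
  shows "\<exists>q\<in>set ps. \<exists>y. refutes R V y q"
  using assms
proof (cases rule: step.cases)
  case (starG p a G)
  show ?thesis
  proof (rule ccontr)
    assume "\<not> ?thesis"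
    then have premise_valid: "sat R V (Box p a) y" if "sat R V a y" "\<forall>g\<in>G. sat R V g y" for y
      using that starG by (auto simp: refutes_def)
    have "sat R V a y" if "(prel R V p)\<^sup>*\<^sup>* x y" for y
      using that
    proof (induction rule: rtranclp_induct)
      case base
      then show ?case using starG assms(2) by (auto simp: refutes_def)
    next
      case (step y z)
      have "\<forall>g\<in>G. sat R V g y" using step(1) starG assms(2) by (auto simp: refutes_def)
      then show ?case using premise_valid[OF step(3)] step(2) by auto
    qed
    then show False using starG assms(2) by (auto simp: refutes_def)
  qed
next
  case (cs p a G D)
  then obtain y where y: "(prel R V p)\<^sup>*\<^sup>* x y" "\<not> sat R V a y"
    using assms(2) by (auto simp: refutes_def)
  show ?thesis
  proof (cases "x = y")
    case True
    then show ?thesis using cs y assms(2) by (auto simp: refutes_def)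
  next
    case False
    then obtain z where "prel R V p x z" "(prel R V p)\<^sup>*\<^sup>* z y"
      using y(1) by (metis converse_rtranclpE)
    then have "refutes R V x (G, insert (Box p (Box (Star p) a)) D)"
      using cs y assms(2) by (auto simp: refutes_def)
    then show ?thesis using cs by auto
  qed
next
  case (starL p a G D)
  then show ?thesis
    using assms(2) by (auto simp: refutes_def intro: converse_rtranclp_into_rtranclp)
next
  case (box p a G D)
  then show ?thesis using assms(2) by (auto simp: refutes_def)
next
  case (boxc p a G D)
  then show ?thesis using assms(2) by (auto simp: refutes_def)
next
  case (wk G G' D D')
  then show ?thesis using assms(2) unfolding refutes_def by auto blast
next
  case (cut a G D)
  then show ?thesis using assms(2) by (cases "sat R V a x") (auto simp: refutes_def)
qed (use assms(2) in \<open>auto simp: refutes_def\<close>)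

lemma step_refutable: "step r s ps \<Longrightarrow> refutable s \<Longrightarrow> \<exists>q\<in>set ps. refutable q"
  unfolding refutable_def by (metis step_refutes)

definition backward_closed :: "(sequent \<Rightarrow> fm \<Rightarrow> bool) \<Rightarrow> (sequent \<Rightarrow> bool) \<Rightarrow> bool" where
  "backward_closed ok Q \<longleftrightarrow> (\<forall>r s ps. step r s ps \<longrightarrow> \<not> is_CS r \<longrightarrow> (\<forall>a. r = Cut a \<longrightarrow> ok s a)
     \<longrightarrow> Q s \<longrightarrow> (\<exists>q\<in>set ps. Q q))"

lemma backward_closed_refutable:
  assumes "\<And>r s ps. step r s ps \<Longrightarrow> \<not> is_CS r \<Longrightarrow> (\<forall>a. r = Cut a \<longrightarrow> ok s a) \<Longrightarrow> S s
    \<Longrightarrow> \<exists>q\<in>set ps. S q \<or> refutable q"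
  shows "backward_closed ok (\<lambda>s. S s \<or> refutable s)"
  unfolding backward_closed_def by (metis assms step_refutable)

lemma gprov_backward_closed:
  assumes "gprov ok s" "backward_closed ok Q"
  shows "\<not> Q s"
  using assms(1)
proof (induction rule: gprov.induct)
  case (1 r s ps)
  then have "step r s ps" by (simp add: rstep_def)
  with 1(2,3) assms(2) have "Q s \<Longrightarrow> \<exists>q\<in>set ps. Q q"
    unfolding backward_closed_def by metis
  with 1(4) show ?case by blast
qed

lemma gprov_mono: "gprov ok s \<Longrightarrow> (\<And>s a. ok s a \<Longrightarrow> ok' s a) \<Longrightarrow> gprov ok' s"
proof (induction rule: gprov.induct)
  case (1 r s ps)
  then show ?case by (intro gprov.intros[of r s ps]) auto
qed

section \<open>Cyclic proofs of star-free sequents\<close>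

primrec star_free :: "fm \<Rightarrow> bool" and star_free_pg :: "pg \<Rightarrow> bool" where
  "star_free Bot = True"
| "star_free (Pr n) = True"
| "star_free (Imp a b) = (star_free a \<and> star_free b)"
| "star_free (Box p a) = (star_free_pg p \<and> star_free a)"
| "star_free (BoxC p a) = (star_free_pg p \<and> star_free a)"
| "star_free_pg (At n) = True"
| "star_free_pg (Seq p q) = (star_free_pg p \<and> star_free_pg q)"
| "star_free_pg (Ch p q) = (star_free_pg p \<and> star_free_pg q)"
| "star_free_pg (Star p) = False"
| "star_free_pg (Test a) = star_free a"

definition star_free_seq :: "sequent \<Rightarrow> bool" where
  "star_free_seq s \<longleftrightarrow> (\<forall>a\<in>fst s \<union> snd s. star_free a)"

lemma star_free_step:
  "step r s ps \<Longrightarrow> (\<forall>a. r \<noteq> Cut a) \<Longrightarrow> star_free_seq s \<Longrightarrow> q \<in> set ps \<Longrightarrow> star_free_seq q"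
  by (cases rule: step.cases) (auto simp: star_free_seq_def ball_Un)

lemma star_free_not_CS: "step r s ps \<Longrightarrow> star_free_seq s \<Longrightarrow> \<not> is_CS r"
  by (cases rule: step.cases) (auto simp: star_free_seq_def)

lemma at_Nil_iff: "at t [] u \<longleftrightarrow> u = t"
  by (blast elim: at.cases intro: at.intros)

lemma at_Bud_iff: "at (Bud s c) p u \<longleftrightarrow> p = [] \<and> u = Bud s c"
  by (blast elim: at.cases intro: at.intros)

lemma at_Nd_iff:
  "at (Nd s r ts) p u \<longleftrightarrow>
     p = [] \<and> u = Nd s r ts \<or> (\<exists>i p'. p = i # p' \<and> i < length ts \<and> at (ts ! i) p' u)"
  by (blast elim: at.cases intro: at.intros)

lemma all_at_Bud_iff: "(\<forall>p u. at (Bud s c) p u \<longrightarrow> P p u) \<longleftrightarrow> P [] (Bud s c)"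
  by (auto simp: at_Bud_iff)

lemma all_at_Nd_iff:
  "(\<forall>p u. at (Nd s r ts) p u \<longrightarrow> P p u) \<longleftrightarrow>
     P [] (Nd s r ts) \<and> (\<forall>i<length ts. \<forall>p u. at (ts ! i) p u \<longrightarrow> P (i # p) u)"
  by (auto simp: at_Nd_iff at_Nil_iff intro: at.intros)

lemma at_snoc: "at t p (Nd s r ts) \<Longrightarrow> i < length ts \<Longrightarrow> at t (p @ [i]) (ts ! i)"
  by (induction t p "Nd s r ts" rule: at.induct) (auto simp: at_Nd_iff at_Nil_iff)

lemma at_propagate:
  assumes "at t p u" "P t"
    and "\<And>q s r ts i. at t q (Nd s r ts) \<Longrightarrow> P (Nd s r ts) \<Longrightarrow> i < length ts \<Longrightarrow> P (ts ! i)"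
  shows "P u"
  using assms
proof (induction rule: at.induct)
  case (2 i ts p u s r)
  have "P (ts ! i)"
    using "2.prems" \<open>i < length ts\<close> at.intros(1) by blast
  moreover have "P (ts' ! j)"
    if "at (ts ! i) q (Nd s' r' ts')" "P (Nd s' r' ts')" "j < length ts'" for q s' r' ts' j
    using "2.prems"(2) at.intros(2)[OF \<open>i < length ts\<close> that(1)] that(2,3) by blast
  ultimately show ?case using "2.IH" by blast
qed

lemma at_length_le_size: "at t p u \<Longrightarrow> length p \<le> size t"
proof (induction rule: at.induct)
  case (2 i ts p u s r)
  have "size (ts ! i) \<le> size_list size ts"
    using size_list_estimation'[OF nth_mem[OF \<open>i < length ts\<close>] order_refl] .
  then show ?case using "2.IH" by simp
qed simp

lemma edge_to_premise:
  assumes "cwf ok t" "at t p (Nd s r ts)" "i < length ts"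
  obtains q r' ts' where "edge t p i q" "at t q (Nd (root (ts ! i)) r' ts')"
proof (cases "ts ! i")
  case (Bud s' c)
  have "at t (p @ [i]) (Bud s' c)" using at_snoc[OF assms(2,3)] Bud by simp
  then obtain r' ts' where "at t c (Nd s' r' ts')"
    using assms(1) unfolding cwf_def by fastforce
  moreover have "edge t p i c"
    unfolding edge_def using assms(2,3) Bud by (intro exI[of _ s] exI[of _ r] exI[of _ ts]) simp
  ultimately show ?thesis using that Bud by simp
next
  case (Nd s' r' ts')
  have "edge t p i (p @ [i])"
    unfolding edge_def using assms(2,3) Nd by (intro exI[of _ s] exI[of _ r] exI[of _ ts]) simp
  moreover have "at t (p @ [i]) (Nd s' r' ts')" using at_snoc[OF assms(2,3)] Nd by simp
  ultimately show ?thesis using that Nd by simp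
qed

lemma cwf_root_node:
  assumes "cwf ok t"
  obtains p r ts where "at t p (Nd (root t) r ts)"
proof (cases t)
  case (Bud s c)
  then have "at t [] (Bud s c)" by (simp add: at.intros(1))
  then show ?thesis using assms that Bud unfolding cwf_def by fastforce
next
  case (Nd s r ts)
  then show ?thesis using that at.intros(1) by fastforce
qed

lemma prog_is_CS: "prog r i a b \<Longrightarrow> is_CS r"
  by (cases r) auto

lemma wf_edges_without_CS:
  assumes "trace_ok t" and no_CS: "\<And>p s r ts. at t p (Nd s r ts) \<Longrightarrow> \<not> is_CS r"
  shows "wf {(q, p). \<exists>i. edge t p i q}"
proof (rule ccontr)
  assume "\<not> ?thesis"
  then obtain ps where "\<forall>k. \<exists>i. edge t (ps k) i (ps (Suc k))"
    unfolding wf_iff_no_infinite_down_chain by blast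
  then obtain "is" where "\<forall>k. edge t (ps k) (is k) (ps (Suc k))" by metis
  then obtain n \<tau> where
    "infinite {k. n \<le> k \<and> (\<exists>s r ts. at t (ps k) (Nd s r ts) \<and> prog r (is k) (\<tau> k) (\<tau> (Suc k)))}"
    using assms(1) unfolding trace_ok_def by blast
  moreover have
    "{k. n \<le> k \<and> (\<exists>s r ts. at t (ps k) (Nd s r ts) \<and> prog r (is k) (\<tau> k) (\<tau> (Suc k)))} = {}"
    using no_CS prog_is_CS by blast
  ultimately show False by (metis finite.emptyI)
qed

lemma cwf_no_cut_step:
  "cwf no_cut t \<Longrightarrow> at t p (Nd s r ts) \<Longrightarrow> step r s (map root ts) \<and> (\<forall>a. r \<noteq> Cut a)"
  unfolding cwf_def rstep_def no_cut_def by fastforce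

lemma cwf_no_cut_star_free_not_CS:
  assumes "cwf no_cut t" "star_free_seq (root t)" "at t p (Nd s r ts)"
  shows "\<not> is_CS r"
proof -
  have "star_free_seq (root (Nd s r ts))"
    using assms(3)
  proof (rule at_propagate)
    fix q s' r' ts' i
    assume "at t q (Nd s' r' ts')" "star_free_seq (root (Nd s' r' ts'))" "i < length ts'"
    then show "star_free_seq (root (ts' ! i))"
      using cwf_no_cut_step[OF assms(1)] star_free_step by (metis nth_mem length_map nth_map root.simps(2))
  qed (rule assms(2))
  then show ?thesis
    using cwf_no_cut_step[OF assms(1,3)] star_free_not_CS[of r s "map root ts"] by simp
qed

lemma cprov_star_free_backward_closed:
  assumes "cprov no_cut s" "star_free_seq s" "backward_closed no_cut Q"
  shows "\<not> Q s"
proof -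
  obtain t where t: "root t = s" "cwf no_cut t" "trace_ok t"
    using assms(1) unfolding cprov_def by blast
  note node_step = cwf_no_cut_step[OF t(2)]
  note no_CS = cwf_no_cut_star_free_not_CS[OF t(2) assms(2)[folded t(1)]]
  have wf: "wf {(q, p). \<exists>i. edge t p i q}"
    using t(3) no_CS by (rule wf_edges_without_CS)
  have "\<forall>s' r ts. at t p (Nd s' r ts) \<longrightarrow> \<not> Q s'" for p
  proof (induction p rule: wf_induct[OF wf])
    case (1 p)
    show ?case
    proof (intro allI impI notI)
      fix s' r ts assume at_p: "at t p (Nd s' r ts)" and "Q s'"
      then have "\<exists>q\<in>set (map root ts). Q q"
        using assms(3) node_step[OF at_p] no_CS[OF at_p] unfolding backward_closed_def no_cut_def by blast
      then obtain i where i: "i < length ts" "Q (root (ts ! i))"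
        by (auto simp: in_set_conv_nth)
      obtain q r' ts' where "edge t p i q" "at t q (Nd (root (ts ! i)) r' ts')"
        using edge_to_premise[OF t(2) at_p i(1)] .
      then show False using 1 i(2) by blast
    qed
  qed
  moreover obtain p r ts where "at t p (Nd (root t) r ts)"
    using cwf_root_node[OF t(2)] .
  ultimately show ?thesis using t(1) by blast
qed

fun bud_free_proof :: "(sequent \<Rightarrow> fm \<Rightarrow> bool) \<Rightarrow> ctree \<Rightarrow> bool" where
  "bud_free_proof ok (Bud s c) = False"
| "bud_free_proof ok (Nd s r ts) = (rstep r s (map root ts) \<and> \<not> is_StarG r \<and> \<not> is_CS r \<and>
      (\<forall>a. r = Cut a \<longrightarrow> ok s a) \<and> (\<forall>u\<in>set ts. bud_free_proof ok u))"

lemma bud_free_proof_at: "at t p u \<Longrightarrow> bud_free_proof ok t \<Longrightarrow> bud_free_proof ok u"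
  by (induction rule: at.induct) auto

lemma bud_free_proof_gprov: "bud_free_proof ok t \<Longrightarrow> gprov ok (root t)"
proof (induction t)
  case (Nd s r ts)
  then have "gprov ok s" by (intro gprov.intros[of r s "map root ts"]) auto
  then show ?case by simp
qed simp

lemma bud_free_proof_cwf: "bud_free_proof ok t \<Longrightarrow> cwf ok t"
  unfolding cwf_def
proof (intro allI impI)
  fix p u assume "bud_free_proof ok t" "at t p u"
  then have "bud_free_proof ok u" using bud_free_proof_at by blast
  then show "case u of Nd s r ts \<Rightarrow> rstep r s (map root ts) \<and> \<not> is_StarG r \<and> (\<forall>a. r = Cut a \<longrightarrow> ok s a)
      | Bud s c \<Rightarrow> (\<exists>r ts. at t c (Nd s r ts) \<and> ts \<noteq> [])"
    by (cases u) auto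
qed

lemma bud_free_proof_no_infinite_path:
  assumes "bud_free_proof ok t"
  shows "\<not> (\<forall>k. edge t (ps k) (is k) (ps (Suc k)))"
proof
  assume path: "\<forall>k. edge t (ps k) (is k) (ps (Suc k))"
  have "length (ps (Suc k)) = Suc (length (ps k))" for k
  proof -
    obtain s r ts where at_k: "at t (ps k) (Nd s r ts)" "is k < length ts"
      and next_k: "case ts ! is k of Nd _ _ _ \<Rightarrow> ps (Suc k) = ps k @ [is k] | Bud _ c \<Rightarrow> ps (Suc k) = c"
      using path unfolding edge_def by blast
    have "bud_free_proof ok (ts ! is k)"
      using bud_free_proof_at[OF at_k(1) assms] at_k(2) by simp
    then show ?thesis using next_k by (cases "ts ! is k") auto
  qed
  then have "k \<le> length (ps k)" for k by (induction k) auto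
  moreover have "length (ps k) \<le> size t" for k
    using path at_length_le_size unfolding edge_def by blast
  ultimately show False by (metis Suc_n_not_le_n order_trans)
qed

lemma bud_free_proof_cprov: "bud_free_proof ok t \<Longrightarrow> cprov ok (root t)"
  unfolding cprov_def trace_ok_def
  using bud_free_proof_cwf bud_free_proof_no_infinite_path by blast

section \<open>A sequent with a cut-free cyclic proof but no GTPDL proof\<close>

definition succ_rel :: "nat \<Rightarrow> nat \<Rightarrow> nat \<Rightarrow> bool" where
  "succ_rel n x y \<longleftrightarrow> y = Suc x"

lemma prel_succ_At [simp]: "prel succ_rel V (At n) = (\<lambda>x y. y = Suc x)"
  by (intro ext) (simp add: succ_rel_def)

lemma rtranclp_Suc_iff_le [simp]: "(\<lambda>x y. y = Suc x)\<^sup>*\<^sup>* x y \<longleftrightarrow> x \<le> y"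
proof
  show "(\<lambda>x y. y = Suc x)\<^sup>*\<^sup>* x y \<Longrightarrow> x \<le> y" by (induction rule: rtranclp_induct) auto
  show "x \<le> y \<Longrightarrow> (\<lambda>x y. y = Suc x)\<^sup>*\<^sup>* x y"
    by (induction rule: dec_induct) (auto intro: rtranclp.rtrancl_into_rtrancl)
qed

abbreviation "\<alpha> \<equiv> At 0"
abbreviation "p\<^sub>0 \<equiv> Pr 0"

abbreviation "\<phi>\<^sub>1 \<equiv> Box \<alpha> (Box (Star \<alpha>) p\<^sub>0)"
abbreviation "\<psi>\<^sub>1 \<equiv> Box (Star \<alpha>) (Box \<alpha> p\<^sub>0)"

definition \<Gamma>\<^sub>1 :: "fm set" where "\<Gamma>\<^sub>1 = {\<phi>\<^sub>1, Box \<alpha> p\<^sub>0, Box \<alpha> \<psi>\<^sub>1}"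
definition \<Delta>\<^sub>1 :: "fm set" where "\<Delta>\<^sub>1 = {\<psi>\<^sub>1, p\<^sub>0, Box (Star \<alpha>) p\<^sub>0}"

definition ex1_shape :: "sequent \<Rightarrow> bool" where
  "ex1_shape s \<longleftrightarrow> fst s \<subseteq> \<Gamma>\<^sub>1 \<and> snd s \<subseteq> \<Delta>\<^sub>1"

lemma \<Delta>\<^sub>1_false_at_2: "d \<in> \<Delta>\<^sub>1 \<Longrightarrow> \<not> sat succ_rel (\<lambda>n x. x = 1) d 2"
  by (auto simp: \<Delta>\<^sub>1_def)

lemma FL_\<Gamma>\<^sub>1_\<Delta>\<^sub>1: "FL (\<Gamma>\<^sub>1 \<union> \<Delta>\<^sub>1) = \<Gamma>\<^sub>1 \<union> \<Delta>\<^sub>1"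
  by (auto simp: FL_def \<Gamma>\<^sub>1_def \<Delta>\<^sub>1_def)

lemma backward_closed_ex1_shape: "backward_closed fl_cut (\<lambda>s. ex1_shape s \<or> refutable s)"
proof (rule backward_closed_refutable)
  fix r s ps
  assume "step r s ps" "\<not> is_CS r" "\<forall>a. r = Cut a \<longrightarrow> fl_cut s a" "ex1_shape s"
  then show "\<exists>q\<in>set ps. ex1_shape q \<or> refutable q"
  proof (cases rule: step.cases)
    case (cut a G D)
    then have "a \<in> FL (\<Gamma>\<^sub>1 \<union> \<Delta>\<^sub>1)"
      using \<open>\<forall>a. r = Cut a \<longrightarrow> fl_cut s a\<close> \<open>ex1_shape s\<close>
      unfolding fl_cut_def FL_def ex1_shape_def by auto
    then show ?thesis using cut \<open>ex1_shape s\<close> FL_\<Gamma>\<^sub>1_\<Delta>\<^sub>1 by (auto simp: ex1_shape_def)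
  next
    case (box p a G D)
    then have "G = {}" "p = Star \<alpha>" "a = Box \<alpha> p\<^sub>0 \<or> a = p\<^sub>0" "D \<subseteq> \<Delta>\<^sub>1"
      using \<open>ex1_shape s\<close> by (auto simp: ex1_shape_def \<Gamma>\<^sub>1_def \<Delta>\<^sub>1_def)
    then have "refutes succ_rel (\<lambda>n x. x = 1) 2 (G, insert a (BoxC p ` D))"
      using \<Delta>\<^sub>1_false_at_2 by (auto simp: refutes_def)
    then show ?thesis using box by (auto simp: refutable_def)
  next
    case (starG p a G)
    then have "G = {}" "p = \<alpha>" "a = Box \<alpha> p\<^sub>0"
      using \<open>ex1_shape s\<close> by (auto simp: ex1_shape_def \<Gamma>\<^sub>1_def \<Delta>\<^sub>1_def)
    then have "refutes succ_rel (\<lambda>n x. x = 1) 0 (insert a G, {Box p a})"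
      by (simp add: refutes_def)
    then show ?thesis using starG by (auto simp: refutable_def)
  next
    case (wk G G' D D')
    then show ?thesis using \<open>ex1_shape s\<close> by (auto simp: ex1_shape_def)
  qed (use \<open>ex1_shape s\<close> \<open>\<not> is_CS r\<close> in \<open>auto simp: ex1_shape_def \<Gamma>\<^sub>1_def \<Delta>\<^sub>1_def\<close>)
qed

lemma not_gprov_fl_cut_ex1: "\<not> gprov fl_cut ({\<phi>\<^sub>1}, {\<psi>\<^sub>1})"
proof
  assume "gprov fl_cut ({\<phi>\<^sub>1}, {\<psi>\<^sub>1})"
  from gprov_backward_closed[OF this backward_closed_ex1_shape] show False
    by (simp add: ex1_shape_def \<Gamma>\<^sub>1_def \<Delta>\<^sub>1_def)
qed

lemma not_gprov_no_cut_ex1: "\<not> gprov no_cut ({\<phi>\<^sub>1}, {\<psi>\<^sub>1})"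
  using not_gprov_fl_cut_ex1 gprov_mono[of no_cut _ fl_cut] by (auto simp: no_cut_def)

definition ex1_proof :: ctree where
  "ex1_proof = Nd ({\<phi>\<^sub>1}, {\<psi>\<^sub>1}) (CS \<alpha> (Box \<alpha> p\<^sub>0))
     [Nd ({\<phi>\<^sub>1}, {Box \<alpha> p\<^sub>0}) (BoxR \<alpha> p\<^sub>0)
        [Nd ({Box (Star \<alpha>) p\<^sub>0}, {p\<^sub>0}) (StarL \<alpha> p\<^sub>0)
           [Nd ({p\<^sub>0, \<phi>\<^sub>1}, {p\<^sub>0}) RAx []]],
      Nd ({\<phi>\<^sub>1}, {Box \<alpha> \<psi>\<^sub>1}) (BoxR \<alpha> \<psi>\<^sub>1)
        [Nd ({Box (Star \<alpha>) p\<^sub>0}, {\<psi>\<^sub>1}) (StarL \<alpha> p\<^sub>0)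
           [Nd ({p\<^sub>0, \<phi>\<^sub>1}, {\<psi>\<^sub>1}) Wk
              [Bud ({\<phi>\<^sub>1}, {\<psi>\<^sub>1}) []]]]]"

lemma cwf_ex1_proof: "cwf no_cut ex1_proof"
proof -
  have "step (CS \<alpha> (Box \<alpha> p\<^sub>0)) ({\<phi>\<^sub>1}, {\<psi>\<^sub>1}) [({\<phi>\<^sub>1}, {Box \<alpha> p\<^sub>0}), ({\<phi>\<^sub>1}, {Box \<alpha> \<psi>\<^sub>1})]"
    using step.cs[of \<alpha> "Box \<alpha> p\<^sub>0" "{\<phi>\<^sub>1}" "{}"] by simp
  moreover have "step (BoxR \<alpha> p\<^sub>0) ({\<phi>\<^sub>1}, {Box \<alpha> p\<^sub>0}) [({Box (Star \<alpha>) p\<^sub>0}, {p\<^sub>0})]"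
    using step.box[of \<alpha> p\<^sub>0 "{Box (Star \<alpha>) p\<^sub>0}" "{}"] by simp
  moreover have "step (StarL \<alpha> p\<^sub>0) ({Box (Star \<alpha>) p\<^sub>0}, {p\<^sub>0}) [({p\<^sub>0, \<phi>\<^sub>1}, {p\<^sub>0})]"
    using step.starL[of \<alpha> p\<^sub>0 "{}" "{p\<^sub>0}"] by simp
  moreover have "step RAx ({p\<^sub>0, \<phi>\<^sub>1}, {p\<^sub>0}) []"
    by (rule step.ax) simp
  moreover have "step (BoxR \<alpha> \<psi>\<^sub>1) ({\<phi>\<^sub>1}, {Box \<alpha> \<psi>\<^sub>1}) [({Box (Star \<alpha>) p\<^sub>0}, {\<psi>\<^sub>1})]"
    using step.box[of \<alpha> \<psi>\<^sub>1 "{Box (Star \<alpha>) p\<^sub>0}" "{}"] by simp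
  moreover have "step (StarL \<alpha> p\<^sub>0) ({Box (Star \<alpha>) p\<^sub>0}, {\<psi>\<^sub>1}) [({p\<^sub>0, \<phi>\<^sub>1}, {\<psi>\<^sub>1})]"
    using step.starL[of \<alpha> p\<^sub>0 "{}" "{\<psi>\<^sub>1}"] by simp
  moreover have "step Wk ({p\<^sub>0, \<phi>\<^sub>1}, {\<psi>\<^sub>1}) [({\<phi>\<^sub>1}, {\<psi>\<^sub>1})]"
    by (rule step.wk) auto
  ultimately show ?thesis
    unfolding cwf_def ex1_proof_def
    by (simp add: all_at_Nd_iff all_at_Bud_iff at_Nil_iff less_Suc_eq rstep_def fin_seq_def)
qed

lemma edge_ex1_proof:
  assumes "edge ex1_proof p i q"
  shows "(p, i, q) \<in> {([], 0, [0]), ([0], 0, [0, 0]), ([0, 0], 0, [0, 0, 0]),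
                       ([], 1, [1]), ([1], 0, [1, 0]), ([1, 0], 0, [1, 0, 0]), ([1, 0, 0], 0, [])}"
    (is "_ \<in> ?E")
proof -
  obtain s r ts where at_p: "at ex1_proof p (Nd s r ts)" and i: "i < length ts"
    and q: "case ts ! i of Nd _ _ _ \<Rightarrow> q = p @ [i] | Bud _ c \<Rightarrow> q = c"
    using assms unfolding edge_def by blast
  have "\<forall>p u. at ex1_proof p u \<longrightarrow> (case u of Bud _ _ \<Rightarrow> True | Nd s r ts \<Rightarrow>
      \<forall>i<length ts. \<forall>q. (case ts ! i of Nd _ _ _ \<Rightarrow> q = p @ [i] | Bud _ c \<Rightarrow> q = c) \<longrightarrow> (p, i, q) \<in> ?E)"
    unfolding ex1_proof_def by (simp add: all_at_Nd_iff all_at_Bud_iff less_Suc_eq)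
  from this[rule_format, OF at_p] have all_i:
    "\<forall>i<length ts. \<forall>q. (case ts ! i of Nd _ _ _ \<Rightarrow> q = p @ [i] | Bud _ c \<Rightarrow> q = c) \<longrightarrow> (p, i, q) \<in> ?E"
    by simp
  show ?thesis using all_i[rule_format, OF i q] .
qed

lemma ex1_proof_infinite_path:
  assumes "\<forall>k. edge ex1_proof (ps k) (is k) (ps (Suc k))"
  shows "ps k = [] \<and> is k = 1 \<and> ps (Suc k) = [1] \<or> ps k = [1] \<and> is k = 0 \<and> ps (Suc k) = [1, 0]
    \<or> ps k = [1, 0] \<and> is k = 0 \<and> ps (Suc k) = [1, 0, 0] \<or> ps k = [1, 0, 0] \<and> is k = 0 \<and> ps (Suc k) = []"
proof -
  note edge = edge_ex1_proof[OF assms[rule_format]]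
  have not_000: "ps k \<noteq> [0, 0, 0]" for k using edge[of k] by auto
  have not_00: "ps k \<noteq> [0, 0]" for k using edge[of k] not_000[of "Suc k"] by auto
  have not_0: "ps k \<noteq> [0]" for k using edge[of k] not_00[of "Suc k"] by auto
  show ?thesis using edge[of k] not_0[of k] not_00[of k] not_000[of k] not_0[of "Suc k"] by auto
qed

lemma trace_ok_ex1_proof: "trace_ok ex1_proof"
  unfolding trace_ok_def
proof (intro allI impI)
  fix ps "is"
  assume "\<forall>k. edge ex1_proof (ps k) (is k) (ps (Suc k))"
  note cycle = ex1_proof_infinite_path[OF this]
  define \<tau> where "\<tau> k = (if ps k = [1] then Box \<alpha> \<psi>\<^sub>1 else \<psi>\<^sub>1)" for k
  have trace: "\<exists>s r ts. at ex1_proof (ps k) (Nd s r ts) \<and> \<tau> k \<in> snd s \<and> tr r (is k) (\<tau> k) (\<tau> (Suc k))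
    \<and> (ps k = [] \<longrightarrow> prog r (is k) (\<tau> k) (\<tau> (Suc k)))" for k
    using cycle[of k] by (auto simp: \<tau>_def ex1_proof_def at_Nd_iff at_Nil_iff)
  have returns: "\<exists>n\<ge>m. ps n = []" for m
  proof -
    have "ps m = [] \<or> ps (Suc m) = [] \<or> ps (Suc (Suc m)) = [] \<or> ps (Suc (Suc (Suc m))) = []"
      using cycle[of m] cycle[of "Suc m"] cycle[of "Suc (Suc m)"] by auto
    then show ?thesis by (blast intro: le_SucI order_refl)
  qed
  have "infinite {k. 0 \<le> k \<and> (\<exists>s r ts. at ex1_proof (ps k) (Nd s r ts) \<and> prog r (is k) (\<tau> k) (\<tau> (Suc k)))}"
    unfolding infinite_nat_iff_unbounded_le
  proof
    fix m
    obtain n where "n \<ge> m" "ps n = []" using returns by blast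
    then show "\<exists>n\<ge>m. n \<in> {k. 0 \<le> k \<and> (\<exists>s r ts. at ex1_proof (ps k) (Nd s r ts) \<and> prog r (is k) (\<tau> k) (\<tau> (Suc k)))}"
      using trace[of n] by blast
  qed
  then show "\<exists>n \<tau>. (\<forall>k\<ge>n. \<exists>s r ts. at ex1_proof (ps k) (Nd s r ts) \<and> \<tau> k \<in> snd s \<and> tr r (is k) (\<tau> k) (\<tau> (Suc k))) \<and>
        infinite {k. n \<le> k \<and> (\<exists>s r ts. at ex1_proof (ps k) (Nd s r ts) \<and> prog r (is k) (\<tau> k) (\<tau> (Suc k)))}"
    using trace by blast
qed

lemma cprov_no_cut_ex1: "cprov no_cut ({\<phi>\<^sub>1}, {\<psi>\<^sub>1})"
  unfolding cprov_def using cwf_ex1_proof trace_ok_ex1_proof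
  by (intro exI[of _ ex1_proof]) (simp add: ex1_proof_def)

section \<open>A sequent that needs cut in both systems\<close>

abbreviation Neg :: "fm \<Rightarrow> fm" where "Neg a \<equiv> Imp a Bot"

abbreviation "\<chi> \<equiv> BoxC \<alpha> (Neg p\<^sub>0)"
abbreviation "\<phi>\<^sub>2 \<equiv> Box \<alpha> (Neg \<chi>)"

definition ex2_shape :: "sequent \<Rightarrow> bool" where
  "ex2_shape s \<longleftrightarrow> (fst s \<subseteq> {p\<^sub>0} \<and> snd s \<subseteq> {\<phi>\<^sub>2}) \<or> (fst s \<subseteq> {\<chi>} \<and> snd s \<subseteq> {Neg \<chi>, Bot, BoxC \<alpha> \<phi>\<^sub>2})"

lemma backward_closed_ex2_shape: "backward_closed no_cut (\<lambda>s. ex2_shape s \<or> refutable s)"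
proof (rule backward_closed_refutable)
  fix r s ps
  assume "step r s ps" "\<not> is_CS r" "\<forall>a. r = Cut a \<longrightarrow> no_cut s a" "ex2_shape s"
  then show "\<exists>q\<in>set ps. ex2_shape q \<or> refutable q"
  proof (cases rule: step.cases)
    case (box p a G D)
    then have "G = {}" "p = \<alpha>" "a = Neg \<chi>" "D \<subseteq> {\<phi>\<^sub>2}"
      using \<open>ex2_shape s\<close> by (auto simp: ex2_shape_def)
    then show ?thesis using box by (auto simp: ex2_shape_def)
  next
    case (boxc p a G D)
    then have "p = \<alpha>" "a = \<phi>\<^sub>2" "G \<subseteq> {Neg p\<^sub>0}" "D \<subseteq> {Neg \<chi>, Bot, BoxC \<alpha> \<phi>\<^sub>2}"
      using \<open>ex2_shape s\<close> by (auto simp: ex2_shape_def)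
    moreover have "\<not> sat succ_rel (\<lambda>n x. False) d 1" if "d \<in> {Neg \<chi>, Bot, BoxC \<alpha> \<phi>\<^sub>2}" for d
      using that by auto
    ultimately have "refutes succ_rel (\<lambda>n x. False) 0 (G, insert a (Box p ` D))"
      by (auto simp: refutes_def)
    then show ?thesis using boxc by (auto simp: refutable_def)
  next
    case (impR a b G D)
    then show ?thesis using \<open>ex2_shape s\<close> by (auto simp: ex2_shape_def)
  next
    case (wk G G' D D')
    then show ?thesis using \<open>ex2_shape s\<close> unfolding ex2_shape_def by auto
  qed (use \<open>ex2_shape s\<close> \<open>\<forall>a. r = Cut a \<longrightarrow> no_cut s a\<close> in \<open>auto simp: ex2_shape_def no_cut_def\<close>)
qed

lemma not_gprov_no_cut_ex2: "\<not> gprov no_cut ({p\<^sub>0}, {\<phi>\<^sub>2})"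
proof
  assume "gprov no_cut ({p\<^sub>0}, {\<phi>\<^sub>2})"
  from gprov_backward_closed[OF this backward_closed_ex2_shape] show False
    by (simp add: ex2_shape_def)
qed

lemma not_cprov_no_cut_ex2: "\<not> cprov no_cut ({p\<^sub>0}, {\<phi>\<^sub>2})"
proof
  assume "cprov no_cut ({p\<^sub>0}, {\<phi>\<^sub>2})"
  from cprov_star_free_backward_closed[OF this _ backward_closed_ex2_shape] show False
    by (simp add: ex2_shape_def star_free_seq_def)
qed

definition ex2_proof :: ctree where
  "ex2_proof = Nd ({p\<^sub>0}, {\<phi>\<^sub>2}) (Cut (Neg p\<^sub>0))
     [Nd ({p\<^sub>0}, {Neg p\<^sub>0, \<phi>\<^sub>2}) Wk
        [Nd ({}, {\<phi>\<^sub>2, Neg p\<^sub>0}) (BoxR \<alpha> (Neg \<chi>))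
           [Nd ({}, {Neg \<chi>, \<chi>}) (ImpR \<chi> Bot)
              [Nd ({\<chi>}, {Bot, \<chi>}) RAx []]]],
      Nd ({Neg p\<^sub>0, p\<^sub>0}, {\<phi>\<^sub>2}) (ImpL p\<^sub>0 Bot)
        [Nd ({p\<^sub>0}, {p\<^sub>0, \<phi>\<^sub>2}) RAx [],
         Nd ({Bot, p\<^sub>0}, {\<phi>\<^sub>2}) RBot []]]"

lemma bud_free_proof_ex2_proof: "bud_free_proof any_cut ex2_proof"
proof -
  have "step (Cut (Neg p\<^sub>0)) ({p\<^sub>0}, {\<phi>\<^sub>2}) [({p\<^sub>0}, {Neg p\<^sub>0, \<phi>\<^sub>2}), ({Neg p\<^sub>0, p\<^sub>0}, {\<phi>\<^sub>2})]"
    using step.cut[of "Neg p\<^sub>0" "{p\<^sub>0}" "{\<phi>\<^sub>2}"] by simp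
  moreover have "step Wk ({p\<^sub>0}, {Neg p\<^sub>0, \<phi>\<^sub>2}) [({}, {\<phi>\<^sub>2, Neg p\<^sub>0})]"
    by (rule step.wk) auto
  moreover have "step (BoxR \<alpha> (Neg \<chi>)) ({}, {\<phi>\<^sub>2, Neg p\<^sub>0}) [({}, {Neg \<chi>, \<chi>})]"
    using step.box[of \<alpha> "Neg \<chi>" "{}" "{Neg p\<^sub>0}"] by simp
  moreover have "step (ImpR \<chi> Bot) ({}, {Neg \<chi>, \<chi>}) [({\<chi>}, {Bot, \<chi>})]"
    using step.impR[of \<chi> Bot "{}" "{\<chi>}"] by simp
  moreover have "step RAx ({\<chi>}, {Bot, \<chi>}) []"
    by (rule step.ax) simp
  moreover have "step (ImpL p\<^sub>0 Bot) ({Neg p\<^sub>0, p\<^sub>0}, {\<phi>\<^sub>2}) [({p\<^sub>0}, {p\<^sub>0, \<phi>\<^sub>2}), ({Bot, p\<^sub>0}, {\<phi>\<^sub>2})]"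
    using step.impL[of p\<^sub>0 Bot "{p\<^sub>0}" "{\<phi>\<^sub>2}"] by simp
  moreover have "step RAx ({p\<^sub>0}, {p\<^sub>0, \<phi>\<^sub>2}) []"
    by (rule step.ax) simp
  moreover have "step RBot ({Bot, p\<^sub>0}, {\<phi>\<^sub>2}) []"
    by (rule step.bot) simp
  ultimately show ?thesis
    unfolding ex2_proof_def by (simp add: rstep_def fin_seq_def any_cut_def)
qed

lemma gprov_cprov_any_cut_ex2: "gprov any_cut ({p\<^sub>0}, {\<phi>\<^sub>2}) \<and> cprov any_cut ({p\<^sub>0}, {\<phi>\<^sub>2})"
  using bud_free_proof_gprov[OF bud_free_proof_ex2_proof] bud_free_proof_cprov[OF bud_free_proof_ex2_proof]
  unfolding ex2_proof_def by simp

theorem mainTheorem8: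
  shows "((\<exists>s. \<not> gprov no_cut s \<and> cprov no_cut s) \<and>
          (\<exists>s. \<not> gprov fl_cut s \<and> cprov no_cut s)) \<and>
         (\<exists>s. gprov any_cut s \<and> cprov any_cut s \<and> \<not> gprov no_cut s \<and> \<not> cprov no_cut s)"
  using not_gprov_no_cut_ex1 not_gprov_fl_cut_ex1 cprov_no_cut_ex1
    gprov_cprov_any_cut_ex2 not_gprov_no_cut_ex2 not_cprov_no_cut_ex2
  by blast

end
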